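(* Let $P_M=\frac{1}{2M}\sum_{i=1}^N\frac{\sigma_n^2d_i^\alpha}{\sigma_{v,i}^2}$. (a) For every $M\ge1$, $\mathrm{MSE}^{(M)}(P_M)\le\dfrac{1}{\sigma_\theta^{-2}+\frac13\sum_{i=1}^N\sigma_{v,i}^{-2}}$. (b) For every $\mathbf{h}$ with all entries nonzero and every $M\ge1$, $\dfrac{\sigma_\theta^2}{1+\zeta_M}\le\mathrm{MSE}_s(P_M;\mathbf{h})<\sigma_\theta^2$, where $\zeta_M=\frac{\mathbf{h}^H\mathbf{h}}{2M}\sum_{i=1}^N\frac{\sigma_\theta^2d_i^\alpha}{\sigma_{v,i}^2}$; if $\mathbf{h}$ has independent entries $h_i\sim\mathcal{CN}(0,d_i^{-\alpha})$ then $\zeta_M\to0$ in probability as $M\to\infty$. (c) For every $M$, $P>0$ and $\mathbf{h}$ with nonzero entries, both $\mathrm{MSE}^{(M)}(P)$ and $\mathrm{MSE}_s(P;\mathbf{h})$ are at least $\dfrac{1}{\sigma_\theta^{-2}+\sum_{i=1}^N\sigma_{v,i}^{-2}}$, are nonincreasing in $P$, and converge to this value as $P\to\infty$.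
   Context: Constants: $\sigma_\theta^2,\sigma_n^2>0$, $\sigma_{v,i}^2>0$, $d_i>0$, $\alpha>0$; $\mathbf{V}=\mathrm{diag}\{\sigma_{v,i}^2\}$. The LMMSE estimator of $\theta\sim\mathcal{CN}(0,\sigma_\theta^2)$ has mean squared error $1/(\sigma_\theta^{-2}+\text{SNR})$ in the multi-antenna case and $\sigma_\theta^2/(1+\text{SNR})$ in the single-antenna case. Multi-antenna (large-$M$): $g_M(x)=\sum_{i=1}^N\frac{Mx_i}{\sigma_n^2d_i^\alpha+\sigma_{v,i}^2Mx_i}$ for $x\in[0,\infty)^N$, $G_M(P)=\max\{g_M(x):x\ge0,\sum_ix_i=P\}$, $\mathrm{MSE}^{(M)}(P)=1/(\sigma_\theta^{-2}+G_M(P))$. Single-antenna: for $\mathbf{h}\in\mathbb{C}^N$, $\mathbf{F}=\mathrm{diag}\{h_i\}$, $\rho(\mathbf{a})=\frac{\sigma_\theta^2\mathbf{a}^H\mathbf{h}\mathbf{h}^H\mathbf{a}}{\mathbf{a}^H\mathbf{F}\mathbf{V}\mathbf{F}^H\mathbf{a}+\sigma_n^2}$, $S(P;\mathbf{h})=\max\{\rho(\mathbf{a}):\mathbf{a}^H\mathbf{a}=P\}$, and $\mathrm{MSE}_s(P;\mathbf{h})=\sigma_\theta^2/(1+S(P;\mathbf{h}))$. *)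

theory Defs
  imports "HOL-Probability.Probability"
begin

text \<open>Sensors are indexed by a finite type 'n (so N = CARD('n)).
  Parameters: st2 = sigma_theta^2, sn2 = sigma_n^2, sv2 i = sigma_{v,i}^2,
  d i = d_i, al = alpha, M = number of antennas.\<close>

definition gM :: "real \<Rightarrow> ('n::finite \<Rightarrow> real) \<Rightarrow> ('n \<Rightarrow> real) \<Rightarrow> real \<Rightarrow> nat \<Rightarrow> ('n \<Rightarrow> real) \<Rightarrow> real" where
  "gM sn2 sv2 d al M x =
     (\<Sum>i\<in>UNIV. real M * x i / (sn2 * d i powr al + sv2 i * real M * x i))"

definition GM :: "real \<Rightarrow> ('n::finite \<Rightarrow> real) \<Rightarrow> ('n \<Rightarrow> real) \<Rightarrow> real \<Rightarrow> nat \<Rightarrow> real \<Rightarrow> real" where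
  "GM sn2 sv2 d al M P =
     Sup (gM sn2 sv2 d al M ` {x. (\<forall>i. 0 \<le> x i) \<and> (\<Sum>i\<in>UNIV. x i) = P})"

definition MSE_multi :: "real \<Rightarrow> real \<Rightarrow> ('n::finite \<Rightarrow> real) \<Rightarrow> ('n \<Rightarrow> real) \<Rightarrow> real \<Rightarrow> nat \<Rightarrow> real \<Rightarrow> real" where
  "MSE_multi st2 sn2 sv2 d al M P = 1 / (1 / st2 + GM sn2 sv2 d al M P)"

text \<open>rho(a) = st2 a^H h h^H a / (a^H F V F^H a + sn2), with F = diag h, V = diag sv2,
  written out: a^H h h^H a = |a^H h|^2 and a^H F V F^H a = sum |a_i|^2 |h_i|^2 sv2_i.\<close>

definition rho :: "real \<Rightarrow> real \<Rightarrow> ('n::finite \<Rightarrow> real) \<Rightarrow> ('n \<Rightarrow> complex) \<Rightarrow> ('n \<Rightarrow> complex) \<Rightarrow> real" where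
  "rho st2 sn2 sv2 h a =
     st2 * (cmod (\<Sum>i\<in>UNIV. cnj (a i) * h i))\<^sup>2 /
     ((\<Sum>i\<in>UNIV. (cmod (a i))\<^sup>2 * (cmod (h i))\<^sup>2 * sv2 i) + sn2)"

definition S_single :: "real \<Rightarrow> real \<Rightarrow> ('n::finite \<Rightarrow> real) \<Rightarrow> ('n \<Rightarrow> complex) \<Rightarrow> real \<Rightarrow> real" where
  "S_single st2 sn2 sv2 h P =
     Sup (rho st2 sn2 sv2 h ` {a. (\<Sum>i\<in>UNIV. (cmod (a i))\<^sup>2) = P})"

definition MSE_single :: "real \<Rightarrow> real \<Rightarrow> ('n::finite \<Rightarrow> real) \<Rightarrow> ('n \<Rightarrow> complex) \<Rightarrow> real \<Rightarrow> real" where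
  "MSE_single st2 sn2 sv2 h P = st2 / (1 + S_single st2 sn2 sv2 h P)"

definition P_M :: "real \<Rightarrow> ('n::finite \<Rightarrow> real) \<Rightarrow> ('n \<Rightarrow> real) \<Rightarrow> real \<Rightarrow> nat \<Rightarrow> real" where
  "P_M sn2 sv2 d al M = 1 / (2 * real M) * (\<Sum>i\<in>UNIV. sn2 * d i powr al / sv2 i)"

definition zeta :: "real \<Rightarrow> ('n::finite \<Rightarrow> real) \<Rightarrow> ('n \<Rightarrow> real) \<Rightarrow> real \<Rightarrow> ('n \<Rightarrow> complex) \<Rightarrow> nat \<Rightarrow> real" where
  "zeta st2 sv2 d al h M =
     (\<Sum>i\<in>UNIV. (cmod (h i))\<^sup>2) / (2 * real M) * (\<Sum>i\<in>UNIV. st2 * d i powr al / sv2 i)"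

definition cn_density :: "real \<Rightarrow> complex \<Rightarrow> real" where
  "cn_density s z = exp (- (cmod z)\<^sup>2 / s) / (pi * s)"

end

theory Submission
  imports Defs
begin

text \<open>
  Both mean squared errors have the LMMSE form 1 / (1/st2 + G P), where
  G P is the maximal received SNR at total power P: G = GM for the multi-antenna system
  and G = S_single / st2 for the single-antenna system.  Every claim is therefore a claim
  about the SNR functions:
  \<^item> each SNR is nonnegative, nondecreasing in P and bounded by SV = \<Sum>i. 1 / sv2 i
    (multi-antenna: every sensor contributes at most 1 / sv2 i; single-antenna:
    Cauchy-Schwarz), and it tends to SV as P \<rightarrow> \<infinity> (sandwiched below by an explicit
    allocation resp. beamformer);
  \<^item> at the power P_M the allocation x_i = sn2 d_i^al / (2 M sv2 i) gives GM \<ge> SV / 3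
    (part (a)), while the single-antenna SNR lies strictly between 0 and zeta (part (b));
  \<^item> zeta is a fixed random variable divided by M, so it tends to 0 in probability
    whatever the distribution of the channel (part (b), probabilistic claim).
\<close>

lemma sensor_snr_nonneg:
  fixes c s m t :: real
  assumes "c > 0" "s > 0" "m \<ge> 0" "t \<ge> 0"
  shows "0 \<le> m * t / (c + s * m * t)"
  using assms by (simp add: add_pos_nonneg)

lemma sensor_snr_le:
  fixes c s m t :: real
  assumes "c > 0" "s > 0" "m \<ge> 0" "t \<ge> 0"
  shows "m * t / (c + s * m * t) \<le> 1 / s"
proof -
  have "c + s * m * t > 0" using assms by (simp add: add_pos_nonneg)
  then show ?thesis using assms by (simp add: divide_simps)
qed

lemma sensor_snr_mono:
  fixes c s m t u :: real
  assumes "c > 0" "s > 0" "m \<ge> 0" "t \<ge> 0" "t \<le> u"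
  shows "m * t / (c + s * m * t) \<le> m * u / (c + s * m * u)"
proof -
  have pos: "c + s * m * t > 0" "c + s * m * u > 0" using assms by (simp_all add: add_pos_nonneg)
  have "m * t * (c + s * m * u) \<le> m * u * (c + s * m * t)"
    using assms by (simp add: algebra_simps mult_left_mono)
  then show ?thesis using pos by (simp add: divide_simps)
qed

lemma sensor_snr_tendsto:
  fixes c s m k :: real
  assumes "c > 0" "s > 0" "m > 0" "k > 0"
  shows "((\<lambda>P. m * (P / k) / (c + s * m * (P / k))) \<longlongrightarrow> 1 / s) at_top"
proof -
  have eq: "eventually (\<lambda>P. 1 / (c * k / m * inverse P + s) = m * (P / k) / (c + s * m * (P / k))) at_top"
    using eventually_gt_at_top[of 0] by eventually_elim (use assms in \<open>simp add: field_simps\<close>)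
  have "((\<lambda>P. c * k / m * inverse P) \<longlongrightarrow> 0) at_top"
    by (intro tendsto_mult_right_zero tendsto_inverse_0_at_top filterlim_ident)
  then have "((\<lambda>P. 1 / (c * k / m * inverse P + s)) \<longlongrightarrow> 1 / (0 + s)) at_top"
    using assms by (intro tendsto_divide tendsto_add tendsto_const) auto
  then show ?thesis using eq by (simp add: tendsto_cong)
qed

text \<open>Scaling a beamformer by u \<ge> 1 scales the signal power N and the amplified sensor
  noise D by u, while the channel noise s stays fixed; this can only raise the SNR.\<close>

lemma scaled_ratio_mono:
  fixes N D s u :: real
  assumes "N \<ge> 0" "D \<ge> 0" "s > 0" "u \<ge> 1"
  shows "N / (D + s) \<le> u * N / (u * D + s)"
proof -
  have pos: "D + s > 0" "u * D + s > 0" using assms by (auto intro: add_nonneg_pos)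
  have "N * s \<le> N * (s * u)" using assms by (intro mult_left_mono) auto
  then have "N * (u * D + s) \<le> u * N * (D + s)" by (simp add: algebra_simps)
  then show ?thesis using pos by (simp add: divide_simps)
qed

section \<open>The multi-antenna SNR GM\<close>

definition power_allocations :: "real \<Rightarrow> ('n::finite \<Rightarrow> real) set" where
  "power_allocations P = {x. (\<forall>i. 0 \<le> x i) \<and> (\<Sum>i\<in>UNIV. x i) = P}"

lemma uniform_allocation:
  "P \<ge> 0 \<Longrightarrow> (\<lambda>_::'n::finite. P / real CARD('n)) \<in> power_allocations P"
  by (simp add: power_allocations_def)

context
  fixes sn2 :: real and sv2 d :: "'n::finite \<Rightarrow> real" and al :: real
  assumes sn2: "sn2 > 0" and sv2: "\<And>i. sv2 i > 0" and d: "\<And>i. d i > 0"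
begin

lemma path_loss_pos: "sn2 * d i powr al > 0"
  using sn2 d[of i] by simp

lemma gM_nonneg: "\<forall>i. 0 \<le> x i \<Longrightarrow> 0 \<le> gM sn2 sv2 d al M x"
  unfolding gM_def by (intro sum_nonneg sensor_snr_nonneg) (use path_loss_pos sv2 in auto)

lemma gM_le: "\<forall>i. 0 \<le> x i \<Longrightarrow> gM sn2 sv2 d al M x \<le> (\<Sum>i\<in>UNIV. 1 / sv2 i)"
  unfolding gM_def by (intro sum_mono sensor_snr_le) (use path_loss_pos sv2 in auto)

lemma GM_eq_Sup: "GM sn2 sv2 d al M P = Sup (gM sn2 sv2 d al M ` power_allocations P)"
  unfolding GM_def power_allocations_def by simp

lemma GM_ge: "x \<in> power_allocations P \<Longrightarrow> gM sn2 sv2 d al M x \<le> GM sn2 sv2 d al M P"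
  unfolding GM_eq_Sup
  by (rule cSUP_upper, assumption, rule bdd_aboveI2[where M = "\<Sum>i\<in>UNIV. 1 / sv2 i"])
     (simp add: gM_le power_allocations_def)

text \<open>GM P lies in [0, SV] and is nondecreasing: unused power can be given to any sensor.\<close>

lemma GM_nonneg: "P \<ge> 0 \<Longrightarrow> 0 \<le> GM sn2 sv2 d al M P"
  by (rule order_trans[OF gM_nonneg GM_ge[OF uniform_allocation]]) auto

lemma GM_le:
  assumes "P \<ge> 0"
  shows "GM sn2 sv2 d al M P \<le> (\<Sum>i\<in>UNIV. 1 / sv2 i)"
  unfolding GM_eq_Sup
proof (rule cSUP_least)
  show "(power_allocations P :: ('n \<Rightarrow> real) set) \<noteq> {}"
    using uniform_allocation[OF assms] by blast
qed (simp add: gM_le power_allocations_def)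

lemma GM_mono:
  assumes "0 \<le> P" "P \<le> Q"
  shows "GM sn2 sv2 d al M P \<le> GM sn2 sv2 d al M Q"
  unfolding GM_eq_Sup[of M P]
proof (rule cSUP_least)
  show "(power_allocations P :: ('n \<Rightarrow> real) set) \<noteq> {}"
    using uniform_allocation[OF assms(1)] by blast
  fix x :: "'n \<Rightarrow> real" assume x: "x \<in> power_allocations P"
  define y where "y = (\<lambda>i. x i + (if i = undefined then Q - P else 0))"
  have y: "y \<in> power_allocations Q"
    using x assms by (auto simp: power_allocations_def y_def sum.distrib)
  have "gM sn2 sv2 d al M x \<le> gM sn2 sv2 d al M y"
    unfolding gM_def by (intro sum_mono sensor_snr_mono)
      (use path_loss_pos sv2 x assms in \<open>auto simp: y_def power_allocations_def\<close>)
  also have "\<dots> \<le> GM sn2 sv2 d al M Q" by (rule GM_ge[OF y])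
  finally show "gM sn2 sv2 d al M x \<le> GM sn2 sv2 d al M Q" .
qed

text \<open>With unbounded power every sensor saturates: already the uniform allocation
  drives the SNR to SV.\<close>

lemma GM_tendsto:
  assumes "M \<ge> 1"
  shows "(GM sn2 sv2 d al M \<longlongrightarrow> (\<Sum>i\<in>UNIV. 1 / sv2 i)) at_top"
proof (rule tendsto_sandwich)
  let ?u = "\<lambda>P. gM sn2 sv2 d al M (\<lambda>_::'n. P / real CARD('n))"
  show "(?u \<longlongrightarrow> (\<Sum>i\<in>UNIV. 1 / sv2 i)) at_top"
    unfolding gM_def by (intro tendsto_sum sensor_snr_tendsto) (use path_loss_pos sv2 assms in auto)
  show "eventually (\<lambda>P. ?u P \<le> GM sn2 sv2 d al M P) at_top"
    using eventually_ge_at_top[of 0] by eventually_elim (rule GM_ge[OF uniform_allocation])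
  show "eventually (\<lambda>P. GM sn2 sv2 d al M P \<le> (\<Sum>i\<in>UNIV. 1 / sv2 i)) at_top"
    using eventually_ge_at_top[of 0] by eventually_elim (rule GM_le)
qed auto

text \<open>Part (a): at P_M, the allocation x_i = sn2 d_i^al / (2 M sv2 i) makes each sensor
  contribute exactly 1 / (3 sv2 i).\<close>

lemma GM_at_P_M:
  assumes "M \<ge> 1"
  shows "(1/3) * (\<Sum>i\<in>UNIV. 1 / sv2 i) \<le> GM sn2 sv2 d al M (P_M sn2 sv2 d al M)"
proof -
  define x where "x = (\<lambda>i. sn2 * d i powr al / (2 * real M * sv2 i))"
  have x: "x \<in> power_allocations (P_M sn2 sv2 d al M)"
    unfolding power_allocations_def P_M_def x_def using sn2 sv2 d assms
    by (auto simp: sum_distrib_left intro!: divide_nonneg_pos mult_nonneg_nonneg sum.cong)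
  have "gM sn2 sv2 d al M x = (\<Sum>i\<in>UNIV. 1 / (3 * sv2 i))"
    unfolding gM_def
  proof (rule sum.cong[OF refl])
    fix i
    show "real M * x i / (sn2 * d i powr al + sv2 i * real M * x i) = 1 / (3 * sv2 i)"
      using path_loss_pos[of i] sv2[of i] d[of i] sn2 assms unfolding x_def by (simp add: field_simps)
  qed
  also have "\<dots> = (1/3) * (\<Sum>i\<in>UNIV. 1 / sv2 i)" by (simp add: sum_distrib_left)
  finally show ?thesis using GM_ge[OF x, where M = M] by linarith
qed

end

section \<open>The single-antenna SNR S_single\<close>

definition beamformers :: "real \<Rightarrow> ('n::finite \<Rightarrow> complex) set" where
  "beamformers P = {a. (\<Sum>i\<in>UNIV. (cmod (a i))\<^sup>2) = P}"

lemma uniform_beamformer: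
  "P \<ge> 0 \<Longrightarrow> (\<lambda>_::'n::finite. complex_of_real (sqrt (P / real CARD('n)))) \<in> beamformers P"
  by (simp add: beamformers_def)

lemma beamformers_nonempty: "P \<ge> 0 \<Longrightarrow> (beamformers P :: ('n::finite \<Rightarrow> complex) set) \<noteq> {}"
  using uniform_beamformer by blast

lemma coherent_gain_le:
  fixes a h :: "'n::finite \<Rightarrow> complex"
  shows "(cmod (\<Sum>i\<in>UNIV. cnj (a i) * h i))\<^sup>2 \<le> (\<Sum>i\<in>UNIV. cmod (a i) * cmod (h i))\<^sup>2"
proof -
  have "cmod (\<Sum>i\<in>UNIV. cnj (a i) * h i) \<le> (\<Sum>i\<in>UNIV. cmod (a i) * cmod (h i))"
    using norm_sum[of "\<lambda>i. cnj (a i) * h i" UNIV] by (simp add: norm_mult)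
  then show ?thesis by (rule power_mono) simp
qed

context
  fixes st2 sn2 :: real and sv2 :: "'n::finite \<Rightarrow> real" and h :: "'n \<Rightarrow> complex"
  assumes st2: "st2 > 0" and sn2: "sn2 > 0" and sv2: "\<And>i. sv2 i > 0"
begin

lemma sensor_noise_nonneg: "0 \<le> (\<Sum>i\<in>UNIV. (cmod (a i))\<^sup>2 * (cmod (h i))\<^sup>2 * sv2 i)"
  by (intro sum_nonneg mult_nonneg_nonneg) (auto simp: less_imp_le[OF sv2])

lemma rho_nonneg: "0 \<le> rho st2 sn2 sv2 h a"
  unfolding rho_def using st2 sn2 sensor_noise_nonneg[of a]
  by (auto intro!: divide_nonneg_pos add_nonneg_pos)

text \<open>Saturation bound: Cauchy-Schwarz with weights sqrt (sv2 i) bounds the coherent gain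
  by the sensor-noise term D times SV, and D / (D + sn2) \<le> 1.\<close>

lemma rho_le_saturation: "rho st2 sn2 sv2 h a \<le> st2 * (\<Sum>i\<in>UNIV. 1 / sv2 i)"
proof -
  define D where "D = (\<Sum>i\<in>UNIV. (cmod (a i))\<^sup>2 * (cmod (h i))\<^sup>2 * sv2 i)"
  define SV where "SV = (\<Sum>i\<in>UNIV. 1 / sv2 i)"
  have D0: "D \<ge> 0" unfolding D_def by (rule sensor_noise_nonneg)
  have SV0: "SV > 0" unfolding SV_def by (rule sum_pos) (use sv2 in auto)
  have "(\<Sum>i\<in>UNIV. cmod (a i) * cmod (h i))\<^sup>2
      = (\<Sum>i\<in>UNIV. (cmod (a i) * cmod (h i) * sqrt (sv2 i)) * (1 / sqrt (sv2 i)))\<^sup>2"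
    using sv2 by (simp add: less_imp_neq[symmetric])
  also have "\<dots> \<le> (\<Sum>i\<in>UNIV. (cmod (a i) * cmod (h i) * sqrt (sv2 i))\<^sup>2) * (\<Sum>i\<in>UNIV. (1 / sqrt (sv2 i))\<^sup>2)"
    by (rule Cauchy_Schwarz_ineq_sum)
  also have "\<dots> = D * SV"
    unfolding D_def SV_def using sv2
    by (intro arg_cong2[where f="(*)"] sum.cong) (auto simp: power_mult_distrib power_divide less_imp_le)
  finally have gain: "(cmod (\<Sum>i\<in>UNIV. cnj (a i) * h i))\<^sup>2 \<le> D * SV"
    using coherent_gain_le[of a h] by linarith
  have "rho st2 sn2 sv2 h a \<le> st2 * (D * SV) / (D + sn2)"
    unfolding rho_def D_def[symmetric] using gain D0 sn2 st2
    by (intro divide_right_mono mult_left_mono) auto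
  also have "\<dots> \<le> st2 * SV"
    using st2 SV0 D0 sn2 by (simp add: divide_simps mult_left_mono)
  finally show ?thesis unfolding SV_def .
qed

text \<open>Low-power bound: dropping the sensor noise and applying Cauchy-Schwarz gives
  rho a \<le> st2 |a|^2 |h|^2 / sn2.\<close>

lemma rho_le_power:
  "rho st2 sn2 sv2 h a \<le> st2 * (\<Sum>i\<in>UNIV. (cmod (a i))\<^sup>2) * (\<Sum>i\<in>UNIV. (cmod (h i))\<^sup>2) / sn2"
proof -
  have "(\<Sum>i\<in>UNIV. cmod (a i) * cmod (h i))\<^sup>2 \<le> (\<Sum>i\<in>UNIV. (cmod (a i))\<^sup>2) * (\<Sum>i\<in>UNIV. (cmod (h i))\<^sup>2)"
    by (rule Cauchy_Schwarz_ineq_sum)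
  then have gain: "(cmod (\<Sum>i\<in>UNIV. cnj (a i) * h i))\<^sup>2 \<le> (\<Sum>i\<in>UNIV. (cmod (a i))\<^sup>2) * (\<Sum>i\<in>UNIV. (cmod (h i))\<^sup>2)"
    using coherent_gain_le[of a h] by linarith
  have "rho st2 sn2 sv2 h a \<le> st2 * (cmod (\<Sum>i\<in>UNIV. cnj (a i) * h i))\<^sup>2 / sn2"
    unfolding rho_def using st2 sn2 sensor_noise_nonneg[of a] by (intro divide_left_mono) auto
  also have "\<dots> \<le> st2 * ((\<Sum>i\<in>UNIV. (cmod (a i))\<^sup>2) * (\<Sum>i\<in>UNIV. (cmod (h i))\<^sup>2)) / sn2"
    using gain st2 sn2 by (intro divide_right_mono mult_left_mono) auto
  finally show ?thesis by (simp add: mult.assoc)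
qed

lemma S_single_eq_Sup: "S_single st2 sn2 sv2 h P = Sup (rho st2 sn2 sv2 h ` beamformers P)"
  unfolding S_single_def beamformers_def by simp

lemma S_single_ge: "a \<in> beamformers P \<Longrightarrow> rho st2 sn2 sv2 h a \<le> S_single st2 sn2 sv2 h P"
  unfolding S_single_eq_Sup
  by (rule cSUP_upper, assumption, rule bdd_aboveI2[where M = "st2 * (\<Sum>i\<in>UNIV. 1 / sv2 i)"])
     (rule rho_le_saturation)

lemma S_single_nonneg: "P \<ge> 0 \<Longrightarrow> 0 \<le> S_single st2 sn2 sv2 h P"
  by (rule order_trans[OF rho_nonneg S_single_ge[OF uniform_beamformer]])

lemma S_single_le_saturation: "P \<ge> 0 \<Longrightarrow> S_single st2 sn2 sv2 h P \<le> st2 * (\<Sum>i\<in>UNIV. 1 / sv2 i)"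
  unfolding S_single_eq_Sup by (rule cSUP_least[OF beamformers_nonempty]) (auto intro: rho_le_saturation)

lemma S_single_le_power:
  "P \<ge> 0 \<Longrightarrow> S_single st2 sn2 sv2 h P \<le> st2 * P * (\<Sum>i\<in>UNIV. (cmod (h i))\<^sup>2) / sn2"
  unfolding S_single_eq_Sup
  by (rule cSUP_least[OF beamformers_nonempty]) (use rho_le_power in \<open>auto simp: beamformers_def\<close>)

text \<open>Monotonicity: rescaling a beamformer of power P to power Q \<ge> P does not lower rho
  (lemma scaled_ratio_mono with u = Q / P).\<close>

lemma S_single_mono:
  assumes PQ: "0 < P" "P \<le> Q"
  shows "S_single st2 sn2 sv2 h P \<le> S_single st2 sn2 sv2 h Q"
  unfolding S_single_eq_Sup[of P]
proof (rule cSUP_least[OF beamformers_nonempty])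
  show "0 \<le> P" using PQ by simp
  fix a :: "'n \<Rightarrow> complex" assume a: "a \<in> beamformers P"
  define t where "t = sqrt (Q / P)"
  have t0: "t \<ge> 0" and t2: "t\<^sup>2 = Q / P" using PQ by (simp_all add: t_def)
  define b where "b = (\<lambda>i. complex_of_real t * a i)"
  have "(\<Sum>i\<in>UNIV. (cmod (b i))\<^sup>2) = t\<^sup>2 * (\<Sum>i\<in>UNIV. (cmod (a i))\<^sup>2)"
    by (simp add: b_def norm_mult power_mult_distrib t0 sum_distrib_left)
  also have "\<dots> = Q" using a PQ t2 by (simp add: beamformers_def)
  finally have b: "b \<in> beamformers Q" by (simp add: beamformers_def)
  have gain: "(\<Sum>i\<in>UNIV. cnj (b i) * h i) = complex_of_real t * (\<Sum>i\<in>UNIV. cnj (a i) * h i)"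
    by (simp add: b_def sum_distrib_left mult.assoc)
  have noise: "(\<Sum>i\<in>UNIV. (cmod (b i))\<^sup>2 * (cmod (h i))\<^sup>2 * sv2 i)
      = t\<^sup>2 * (\<Sum>i\<in>UNIV. (cmod (a i))\<^sup>2 * (cmod (h i))\<^sup>2 * sv2 i)"
    by (simp add: b_def sum_distrib_left norm_mult power_mult_distrib t0 mult.assoc)
  have "(cmod (\<Sum>i\<in>UNIV. cnj (a i) * h i))\<^sup>2 / ((\<Sum>i\<in>UNIV. (cmod (a i))\<^sup>2 * (cmod (h i))\<^sup>2 * sv2 i) + sn2)
     \<le> t\<^sup>2 * (cmod (\<Sum>i\<in>UNIV. cnj (a i) * h i))\<^sup>2
        / (t\<^sup>2 * (\<Sum>i\<in>UNIV. (cmod (a i))\<^sup>2 * (cmod (h i))\<^sup>2 * sv2 i) + sn2)"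
    by (rule scaled_ratio_mono) (use sensor_noise_nonneg sn2 PQ t2 in auto)
  then have "rho st2 sn2 sv2 h a \<le> rho st2 sn2 sv2 h b"
    unfolding rho_def gain noise using st2
    by (simp add: norm_mult power_mult_distrib t0 mult.assoc
        times_divide_eq_right[symmetric] del: times_divide_eq_right)
  also have "\<dots> \<le> S_single st2 sn2 sv2 h Q" by (rule S_single_ge[OF b])
  finally show "rho st2 sn2 sv2 h a \<le> S_single st2 sn2 sv2 h Q" .
qed

text \<open>With a channel without zero entries, the matched beamformer a = c h has a positive
  SNR, so S_single is positive for P > 0.\<close>

lemma S_single_pos:
  assumes h: "\<forall>i. h i \<noteq> 0" and P: "P > 0"
  shows "S_single st2 sn2 sv2 h P > 0"
proof -
  define H where "H = (\<Sum>i\<in>UNIV. (cmod (h i))\<^sup>2)"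
  have H: "H > 0" unfolding H_def by (rule sum_pos) (use h in auto)
  define c where "c = sqrt (P / H)"
  have c: "c > 0" using P H by (simp add: c_def)
  define a where "a = (\<lambda>i. complex_of_real c * h i)"
  have "(\<Sum>i\<in>UNIV. (cmod (a i))\<^sup>2) = c\<^sup>2 * H"
    using c by (simp add: a_def H_def norm_mult power_mult_distrib sum_distrib_left)
  also have "\<dots> = P" using P H by (simp add: c_def)
  finally have a: "a \<in> beamformers P" by (simp add: beamformers_def)
  have "\<And>i. cnj (h i) * h i = complex_of_real ((cmod (h i))\<^sup>2)"
    by (metis complex_norm_square mult.commute)
  then have "(\<Sum>i\<in>UNIV. cnj (a i) * h i) = complex_of_real (c * H)"
    by (simp add: a_def H_def sum_distrib_left mult.assoc of_real_sum del: of_real_power)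
  then have "cmod (\<Sum>i\<in>UNIV. cnj (a i) * h i) > 0" using c H by simp
  then have "rho st2 sn2 sv2 h a > 0"
    unfolding rho_def using st2 sn2 sensor_noise_nonneg[of a]
    by (intro divide_pos_pos mult_pos_pos) (auto intro: add_nonneg_pos)
  then show ?thesis using S_single_ge[OF a] by linarith
qed

text \<open>The zero-forcing-like beamformer a_i = k / (sv2 i conj h_i) equalises the sensor
  contributions and attains st2 k^2 SV^2 / (k^2 SV + sn2), which tends to st2 SV.\<close>

lemma S_single_ge_equalising:
  assumes h: "\<forall>i. h i \<noteq> 0" and P: "P > 0"
  defines "SV \<equiv> \<Sum>i\<in>UNIV. 1 / sv2 i"
    and "B \<equiv> \<Sum>i\<in>UNIV. 1 / ((sv2 i)\<^sup>2 * (cmod (h i))\<^sup>2)"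
  shows "st2 * ((P / B) * SV\<^sup>2) / ((P / B) * SV + sn2) \<le> S_single st2 sn2 sv2 h P"
proof -
  have B: "B > 0" unfolding B_def by (rule sum_pos) (use sv2 h in \<open>auto simp: less_imp_neq[OF sv2, symmetric]\<close>)
  define k where "k = sqrt (P / B)"
  have k: "k > 0" and k2: "k\<^sup>2 = P / B" using P B by (simp_all add: k_def)
  define a where "a = (\<lambda>i. complex_of_real (k / sv2 i) / cnj (h i))"
  have norm_a: "(cmod (a i))\<^sup>2 = k\<^sup>2 * (1 / ((sv2 i)\<^sup>2 * (cmod (h i))\<^sup>2))" for i
    using k sv2[of i]
    by (simp add: a_def norm_divide power_divide abs_of_pos power2_eq_square norm_mult)
  have "(\<Sum>i\<in>UNIV. (cmod (a i))\<^sup>2) = k\<^sup>2 * B" by (simp add: norm_a B_def sum_distrib_left)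
  then have a: "a \<in> beamformers P" using k2 B by (simp add: beamformers_def)
  have "cnj (a i) * h i = complex_of_real (k / sv2 i)" for i using h by (simp add: a_def)
  then have gain: "(\<Sum>i\<in>UNIV. cnj (a i) * h i) = complex_of_real (k * SV)"
    by (simp add: SV_def sum_distrib_left)
  have "(cmod (a i))\<^sup>2 * (cmod (h i))\<^sup>2 * sv2 i = k\<^sup>2 * (1 / sv2 i)" for i
    using h sv2[of i] unfolding norm_a by (simp add: power2_eq_square field_simps)
  then have noise: "(\<Sum>i\<in>UNIV. (cmod (a i))\<^sup>2 * (cmod (h i))\<^sup>2 * sv2 i) = k\<^sup>2 * SV"
    by (simp add: SV_def sum_distrib_left)
  have "rho st2 sn2 sv2 h a = st2 * ((P / B) * SV\<^sup>2) / ((P / B) * SV + sn2)"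
    unfolding rho_def gain noise k2[symmetric] using k by (simp add: power_mult_distrib norm_mult)
  then show ?thesis using S_single_ge[OF a] by simp
qed

lemma S_single_tendsto:
  assumes h: "\<forall>i. h i \<noteq> 0"
  shows "(S_single st2 sn2 sv2 h \<longlongrightarrow> st2 * (\<Sum>i\<in>UNIV. 1 / sv2 i)) at_top"
proof -
  define SV where "SV = (\<Sum>i\<in>UNIV. 1 / sv2 i)"
  define B where "B = (\<Sum>i\<in>UNIV. 1 / ((sv2 i)\<^sup>2 * (cmod (h i))\<^sup>2))"
  have SV: "SV > 0" unfolding SV_def by (rule sum_pos) (use sv2 in auto)
  have B: "B > 0" unfolding B_def by (rule sum_pos) (use sv2 h in \<open>auto simp: less_imp_neq[OF sv2, symmetric]\<close>)
  define f where "f = (\<lambda>P. st2 * ((P / B) * SV\<^sup>2) / ((P / B) * SV + sn2))"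
  have f_eq: "eventually (\<lambda>P. st2 * SV\<^sup>2 / (SV + sn2 * B * inverse P) = f P) at_top"
    using eventually_gt_at_top[of 0] by eventually_elim (use B SV sn2 in \<open>simp add: f_def field_simps\<close>)
  have "((\<lambda>P. sn2 * B * inverse P) \<longlongrightarrow> 0) at_top"
    by (intro tendsto_mult_right_zero tendsto_inverse_0_at_top filterlim_ident)
  then have "((\<lambda>P. st2 * SV\<^sup>2 / (SV + sn2 * B * inverse P)) \<longlongrightarrow> st2 * SV\<^sup>2 / (SV + 0)) at_top"
    using SV by (intro tendsto_divide tendsto_add tendsto_const) auto
  then have f_lim: "(f \<longlongrightarrow> st2 * SV) at_top"
    using f_eq SV by (simp add: tendsto_cong power2_eq_square)
  show ?thesis unfolding SV_def[symmetric]
  proof (rule tendsto_sandwich[OF _ _ f_lim tendsto_const])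
    show "eventually (\<lambda>P. f P \<le> S_single st2 sn2 sv2 h P) at_top"
      using eventually_gt_at_top[of 0] unfolding f_def SV_def B_def
      by eventually_elim (rule S_single_ge_equalising[OF h])
    show "eventually (\<lambda>P. S_single st2 sn2 sv2 h P \<le> st2 * SV) at_top"
      using eventually_ge_at_top[of 0] unfolding SV_def
      by eventually_elim (rule S_single_le_saturation)
  qed
qed

end

section \<open>A random variable divided by n tends to zero in probability\<close>

text \<open>The events {\<epsilon> < |X / (n+1)|} decrease to the empty set, so their probabilities tend
  to 0 by continuity of the measure from above; no distributional assumption is needed.\<close>

lemma divided_rv_tendsto_zero_in_prob:
  fixes X :: "'w \<Rightarrow> real"
  assumes "prob_space \<Omega>" and X: "X \<in> borel_measurable \<Omega>" and e: "\<epsilon> > 0"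
  shows "(\<lambda>n. measure \<Omega> {\<omega> \<in> space \<Omega>. \<bar>X \<omega> / real n\<bar> > \<epsilon>}) \<longlonglongrightarrow> 0"
proof -
  interpret prob_space \<Omega> by fact
  define A where "A = (\<lambda>n. {\<omega> \<in> space \<Omega>. \<bar>X \<omega>\<bar> / real (Suc n) > \<epsilon>})"
  have A_sets: "range A \<subseteq> sets \<Omega>" unfolding A_def using X by auto
  have A_dec: "decseq A"
  proof (rule decseq_SucI, rule subsetI)
    fix n \<omega> assume "\<omega> \<in> A (Suc n)"
    moreover have "\<bar>X \<omega>\<bar> / real (Suc (Suc n)) \<le> \<bar>X \<omega>\<bar> / real (Suc n)"
      by (intro divide_left_mono) auto
    ultimately show "\<omega> \<in> A n" unfolding A_def by auto
  qed
  have A_empty: "(\<Inter>n. A n) = {}"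
  proof (rule ccontr)
    assume "(\<Inter>n. A n) \<noteq> {}"
    then obtain \<omega> where \<omega>: "\<And>n. \<omega> \<in> A n" by blast
    obtain n :: nat where n: "\<bar>X \<omega>\<bar> / \<epsilon> < real n" using reals_Archimedean2 by blast
    have "\<epsilon> * real (Suc n) < \<bar>X \<omega>\<bar>" using \<omega>[of n] by (simp add: A_def field_simps)
    moreover have "\<bar>X \<omega>\<bar> < \<epsilon> * real n" using n e by (simp add: field_simps)
    ultimately show False using e by (simp add: field_simps)
  qed
  have "(\<lambda>n. measure \<Omega> (A n)) \<longlonglongrightarrow> measure \<Omega> (\<Inter>n. A n)"
    by (rule finite_Lim_measure_decseq[OF A_sets A_dec])
  then have "(\<lambda>n. measure \<Omega> (A n)) \<longlonglongrightarrow> 0" unfolding A_empty by simp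
  then show ?thesis unfolding A_def
    by (subst filterlim_sequentially_Suc[symmetric]) (simp add: abs_divide)
qed

section \<open>From an SNR function to its LMMSE error\<close>

lemma lmmse_error_from_snr:
  fixes G :: "real \<Rightarrow> real" and s B :: real
  assumes s: "s > 0"
    and bounds: "\<And>P. P > 0 \<Longrightarrow> 0 \<le> G P \<and> G P \<le> B"
    and mono: "\<And>P Q. 0 < P \<Longrightarrow> P \<le> Q \<Longrightarrow> G P \<le> G Q"
    and lim: "(G \<longlongrightarrow> B) at_top"
  shows "(\<forall>P>0. 1 / (1/s + B) \<le> 1 / (1/s + G P))
    \<and> (\<forall>P Q. 0 < P \<longrightarrow> P \<le> Q \<longrightarrow> 1 / (1/s + G Q) \<le> 1 / (1/s + G P))
    \<and> ((\<lambda>P. 1 / (1/s + G P)) \<longlongrightarrow> 1 / (1/s + B)) at_top"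
proof (intro conjI allI impI)
  have s_inv: "1 / s > 0" using s by simp
  show "1 / (1/s + B) \<le> 1 / (1/s + G P)" if "P > 0" for P
    using bounds[OF that] s_inv by (intro divide_left_mono) (auto intro!: mult_pos_pos add_pos_nonneg)
  show "1 / (1/s + G Q) \<le> 1 / (1/s + G P)" if "0 < P" "P \<le> Q" for P Q
    using bounds[OF that(1)] mono[OF that] s_inv
    by (intro divide_left_mono) (auto intro!: mult_pos_pos add_pos_nonneg)
  have "1/s + B > 0" using bounds[of 1] s_inv by linarith
  then show "((\<lambda>P. 1 / (1/s + G P)) \<longlongrightarrow> 1 / (1/s + B)) at_top"
    using s_inv lim by (intro tendsto_divide tendsto_add tendsto_const) auto
qed

lemma multi_antenna_error_at_P_M:
  fixes sv2 d :: "'n::finite \<Rightarrow> real"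
  assumes st2: "st2 > 0" and sn2: "sn2 > 0" and sv2: "\<And>i. sv2 i > 0" and d: "\<And>i. d i > 0"
    and M: "M \<ge> 1"
  shows "MSE_multi st2 sn2 sv2 d al M (P_M sn2 sv2 d al M)
           \<le> 1 / (1 / st2 + (1/3) * (\<Sum>i\<in>UNIV. 1 / sv2 i))"
proof -
  have "0 < 1 / st2 + (1/3) * (\<Sum>i\<in>UNIV. 1 / sv2 i)"
    using st2 sv2 by (intro add_pos_pos mult_pos_pos sum_pos) auto
  moreover have "1 / st2 + (1/3) * (\<Sum>i\<in>UNIV. 1 / sv2 i)
      \<le> 1 / st2 + GM sn2 sv2 d al M (P_M sn2 sv2 d al M)"
    using GM_at_P_M[OF sn2 sv2 d M] by simp
  ultimately show ?thesis unfolding MSE_multi_def by (intro divide_left_mono) auto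
qed

lemma P_M_pos:
  fixes sv2 d :: "'n::finite \<Rightarrow> real"
  assumes "sn2 > 0" "\<And>i. sv2 i > 0" "\<And>i. d i > 0" "M \<ge> 1"
  shows "P_M sn2 sv2 d al M > 0"
proof -
  have "0 < d i powr al" for i using assms(3)[of i] by simp
  then have "(\<Sum>i\<in>UNIV. sn2 * d i powr al / sv2 i) > 0"
    using assms by (intro sum_pos divide_pos_pos mult_pos_pos) auto
  then show ?thesis using assms(4) by (simp add: P_M_def)
qed

lemma zeta_eq_power_bound:
  assumes "sn2 > 0"
  shows "zeta st2 sv2 d al h M = st2 * P_M sn2 sv2 d al M * (\<Sum>i\<in>UNIV. (cmod (h i))\<^sup>2) / sn2"
proof -
  have "(\<Sum>i\<in>UNIV. c * d i powr al / sv2 i) = c * (\<Sum>i\<in>UNIV. d i powr al / sv2 i)" for c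
    by (simp add: sum_distrib_left)
  then show ?thesis unfolding zeta_def P_M_def using assms by (simp add: field_simps)
qed

lemma single_antenna_error_at_P_M:
  fixes sv2 d :: "'n::finite \<Rightarrow> real" and h :: "'n \<Rightarrow> complex"
  assumes st2: "st2 > 0" and sn2: "sn2 > 0" and sv2: "\<And>i. sv2 i > 0" and d: "\<And>i. d i > 0"
    and h: "\<forall>i. h i \<noteq> 0" and M: "M \<ge> 1"
  shows "st2 / (1 + zeta st2 sv2 d al h M) \<le> MSE_single st2 sn2 sv2 h (P_M sn2 sv2 d al M)
    \<and> MSE_single st2 sn2 sv2 h (P_M sn2 sv2 d al M) < st2"
proof -
  let ?S = "S_single st2 sn2 sv2 h (P_M sn2 sv2 d al M)"
  have P: "P_M sn2 sv2 d al M > 0" by (rule P_M_pos[OF sn2 sv2 d M])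
  have S_pos: "0 < ?S" by (rule S_single_pos[OF st2 sn2 sv2 h P])
  have "?S \<le> zeta st2 sv2 d al h M"
    unfolding zeta_eq_power_bound[OF sn2] using P by (intro S_single_le_power[OF st2 sn2 sv2]) simp
  then show ?thesis unfolding MSE_single_def using S_pos st2
    by (auto intro!: divide_left_mono divide_strict_left_mono_neg simp: divide_simps)
qed

lemma zeta_tendsto_zero_in_prob:
  fixes \<Omega> :: "'w measure" and H :: "'n::finite \<Rightarrow> 'w \<Rightarrow> complex"
  assumes "prob_space \<Omega>" and H: "\<And>i. H i \<in> borel_measurable \<Omega>" and "\<epsilon> > 0"
  shows "(\<lambda>M. measure \<Omega> {\<omega> \<in> space \<Omega>. \<bar>zeta st2 sv2 d al (\<lambda>i. H i \<omega>) M\<bar> > \<epsilon>}) \<longlonglongrightarrow> 0"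
proof -
  define C where "C = (\<Sum>i\<in>UNIV. st2 * d i powr al / sv2 i)"
  define X where "X = (\<lambda>\<omega>. (\<Sum>i\<in>UNIV. (cmod (H i \<omega>))\<^sup>2) * C / 2)"
  have "X \<in> borel_measurable \<Omega>" unfolding X_def using H by measurable
  moreover have "zeta st2 sv2 d al (\<lambda>i. H i \<omega>) M = X \<omega> / real M" for \<omega> M
    by (simp add: zeta_def X_def C_def)
  ultimately show ?thesis using divided_rv_tendsto_zero_in_prob assms by simp
qed

lemma errors_bound_mono_limit:
  fixes sv2 d :: "'n::finite \<Rightarrow> real" and h :: "'n \<Rightarrow> complex"
  assumes st2: "st2 > 0" and sn2: "sn2 > 0" and sv2: "\<And>i. sv2 i > 0" and d: "\<And>i. d i > 0"
    and h: "\<forall>i. h i \<noteq> 0" and M: "M \<ge> 1"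
  defines "L \<equiv> 1 / (1 / st2 + (\<Sum>i\<in>UNIV. 1 / sv2 i))"
  shows "(\<forall>P>0. L \<le> MSE_multi st2 sn2 sv2 d al M P \<and> L \<le> MSE_single st2 sn2 sv2 h P)
    \<and> (\<forall>P Q. 0 < P \<longrightarrow> P \<le> Q \<longrightarrow>
          MSE_multi st2 sn2 sv2 d al M Q \<le> MSE_multi st2 sn2 sv2 d al M P
        \<and> MSE_single st2 sn2 sv2 h Q \<le> MSE_single st2 sn2 sv2 h P)
    \<and> (MSE_multi st2 sn2 sv2 d al M \<longlongrightarrow> L) at_top
    \<and> (MSE_single st2 sn2 sv2 h \<longlongrightarrow> L) at_top"
proof -
  let ?SV = "\<Sum>i\<in>UNIV. 1 / sv2 i"
  let ?S = "S_single st2 sn2 sv2 h"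
  have multi: "MSE_multi st2 sn2 sv2 d al M = (\<lambda>P. 1 / (1 / st2 + GM sn2 sv2 d al M P))"
    by (simp add: fun_eq_iff MSE_multi_def)
  have single: "MSE_single st2 sn2 sv2 h = (\<lambda>P. 1 / (1 / st2 + ?S P / st2))"
    using st2 by (simp add: fun_eq_iff MSE_single_def field_simps)
  have "((\<lambda>P. ?S P / st2) \<longlongrightarrow> st2 * ?SV / st2) at_top"
    by (intro tendsto_divide tendsto_const S_single_tendsto[OF st2 sn2 sv2 h]) (use st2 in simp)
  then have S_lim: "((\<lambda>P. ?S P / st2) \<longlongrightarrow> ?SV) at_top" using st2 by simp
  have S_bounds: "\<And>P. P > 0 \<Longrightarrow> 0 \<le> ?S P / st2 \<and> ?S P / st2 \<le> ?SV"
    using S_single_nonneg[of st2 sn2 sv2 _ h, OF st2 sn2 sv2]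
      S_single_le_saturation[of st2 sn2 sv2 _ h, OF st2 sn2 sv2] st2
    by (auto simp: divide_simps mult.commute)
  have S_mono: "\<And>P Q. 0 < P \<Longrightarrow> P \<le> Q \<Longrightarrow> ?S P / st2 \<le> ?S Q / st2"
    using S_single_mono[of st2 sn2 sv2 _ _ h, OF st2 sn2 sv2] st2 by (simp add: divide_right_mono)
  have "(\<forall>P>0. L \<le> MSE_single st2 sn2 sv2 h P)
    \<and> (\<forall>P Q. 0 < P \<longrightarrow> P \<le> Q \<longrightarrow> MSE_single st2 sn2 sv2 h Q \<le> MSE_single st2 sn2 sv2 h P)
    \<and> (MSE_single st2 sn2 sv2 h \<longlongrightarrow> L) at_top"
    unfolding single L_def by (rule lmmse_error_from_snr[OF st2 S_bounds S_mono S_lim])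
  moreover have "(\<forall>P>0. L \<le> MSE_multi st2 sn2 sv2 d al M P)
    \<and> (\<forall>P Q. 0 < P \<longrightarrow> P \<le> Q \<longrightarrow> MSE_multi st2 sn2 sv2 d al M Q \<le> MSE_multi st2 sn2 sv2 d al M P)
    \<and> (MSE_multi st2 sn2 sv2 d al M \<longlongrightarrow> L) at_top"
    unfolding multi L_def
    by (rule lmmse_error_from_snr[OF st2 _ GM_mono[of sn2 sv2 d, OF sn2 sv2 d] GM_tendsto[of sn2 sv2 d, OF sn2 sv2 d M]])
       (use GM_nonneg[of sn2 sv2 d, OF sn2 sv2 d] GM_le[of sn2 sv2 d, OF sn2 sv2 d] in auto)
  ultimately show ?thesis by blast
qed

theorem corollary1:
  fixes st2 sn2 al :: real and sv2 d :: "'n::finite \<Rightarrow> real"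
  assumes st2: "st2 > 0" and sn2: "sn2 > 0" and al: "al > 0"
    and sv2: "\<And>i. sv2 i > 0" and d: "\<And>i. d i > 0"
  shows
    \<comment> \<open>(a)\<close>
    "(\<forall>M::nat. M \<ge> 1 \<longrightarrow>
        MSE_multi st2 sn2 sv2 d al M (P_M sn2 sv2 d al M)
          \<le> 1 / (1 / st2 + (1/3) * (\<Sum>i\<in>UNIV. 1 / sv2 i)))
     \<comment> \<open>(b), deterministic part\<close>
     \<and> (\<forall>h :: 'n \<Rightarrow> complex. (\<forall>i. h i \<noteq> 0) \<longrightarrow>
         (\<forall>M::nat. M \<ge> 1 \<longrightarrow>
            st2 / (1 + zeta st2 sv2 d al h M)
              \<le> MSE_single st2 sn2 sv2 h (P_M sn2 sv2 d al M)
            \<and> MSE_single st2 sn2 sv2 h (P_M sn2 sv2 d al M) < st2))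
     \<comment> \<open>(b), convergence in probability\<close>
     \<and> (\<forall>(\<Omega> :: 'w measure) (H :: 'n \<Rightarrow> 'w \<Rightarrow> complex).
          prob_space \<Omega>
          \<longrightarrow> prob_space.indep_vars \<Omega> (\<lambda>_. borel) H UNIV
          \<longrightarrow> (\<forall>i. distributed \<Omega> lborel (H i)
                      (\<lambda>z. ennreal (cn_density (d i powr (- al)) z)))
          \<longrightarrow> (\<forall>\<epsilon>>0. (\<lambda>M. measure \<Omega>
                 {\<omega> \<in> space \<Omega>. \<bar>zeta st2 sv2 d al (\<lambda>i. H i \<omega>) M\<bar> > \<epsilon>})
                 \<longlonglongrightarrow> 0))
     \<comment> \<open>(c)\<close>
     \<and> (\<forall>M::nat. M \<ge> 1 \<longrightarrow> (\<forall>h :: 'n \<Rightarrow> complex. (\<forall>i. h i \<noteq> 0) \<longrightarrow>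
         (let L = 1 / (1 / st2 + (\<Sum>i\<in>UNIV. 1 / sv2 i)) in
           (\<forall>P>0. L \<le> MSE_multi st2 sn2 sv2 d al M P
                  \<and> L \<le> MSE_single st2 sn2 sv2 h P)
           \<and> (\<forall>P Q. 0 < P \<longrightarrow> P \<le> Q \<longrightarrow>
                  MSE_multi st2 sn2 sv2 d al M Q \<le> MSE_multi st2 sn2 sv2 d al M P
                  \<and> MSE_single st2 sn2 sv2 h Q \<le> MSE_single st2 sn2 sv2 h P)
           \<and> (MSE_multi st2 sn2 sv2 d al M \<longlongrightarrow> L) at_top
           \<and> (MSE_single st2 sn2 sv2 h \<longlongrightarrow> L) at_top)))"
proof -
  have zeta_in_prob: "(\<lambda>M. measure \<Omega> {\<omega> \<in> space \<Omega>. \<bar>zeta st2 sv2 d al (\<lambda>i. H i \<omega>) M\<bar> > \<epsilon>})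
      \<longlonglongrightarrow> 0"
    if "prob_space \<Omega>" and "\<epsilon> > 0"
      and dist: "\<forall>i. distributed \<Omega> lborel (H i) (\<lambda>z. ennreal (cn_density (d i powr (- al)) z))"
    for \<Omega> :: "'w measure" and H :: "'n \<Rightarrow> 'w \<Rightarrow> complex" and \<epsilon>
  proof (rule zeta_tendsto_zero_in_prob[OF that(1) _ that(2)])
    show "H i \<in> borel_measurable \<Omega>" for i
      using distributed_measurable[OF dist[rule_format, of i]]
      by (simp add: measurable_cong_sets[OF refl sets_lborel])
  qed
  show ?thesis
    unfolding Let_def
    using multi_antenna_error_at_P_M[of st2 sn2 sv2 d, OF st2 sn2 sv2 d]
      single_antenna_error_at_P_M[of st2 sn2 sv2 d, OF st2 sn2 sv2 d]
      errors_bound_mono_limit[of st2 sn2 sv2 d, OF st2 sn2 sv2 d] zeta_in_prob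
    by blast
qed

end
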